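(* Let $M$ be a finite-dimensional left $\mathsf{VBr}_{r,t}(\omega)$-module with decomposition $M=\bigoplus_{\mathbf a,\mathbf i}1_{\mathbf a}M_{\mathbf i}$. Let $\mathbf a\in\mathrm{Seq}_{r,t}$, $k\in\{1,\dots,r+t-1\}$ with $\mathsf s_k\mathbf a\neq\mathbf a$, and $\mathbf i\in\mathbb C^{r+t}$; let $I=\{\mathbf i'\in\mathbb C^{r+t}:\mathrm i'_j=\mathrm i_j\text{ for }j\ne k,k+1,\ \mathrm i'_k+\mathrm i'_{k+1}=0\}$. Then $\hat s_k1_{\mathbf a}M_{\mathbf i}\subseteq1_{\mathsf s_k\mathbf a}M_{\mathsf s_k\mathbf i}$ if $\mathrm i_k+\mathrm i_{k+1}\neq0$, and $\hat s_k1_{\mathbf a}M_{\mathbf i}\subseteq\bigoplus_{\mathbf i'\in I}1_{\mathsf s_k\mathbf a}M_{\mathbf i'}$ if $\mathrm i_k+\mathrm i_{k+1}=0$.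
   Context: $\mathrm{Seq}_{r,t}$: sequences $\mathbf a\in\{\wedge,\vee\}^{r+t}$ with exactly $r$ entries $\wedge$; $J=\{1,\dots,r+t-1\}$; $\mathsf s_k$ swaps entries $k,k+1$ (of sequences and of vectors in $\mathbb C^{r+t}$). $\mathrm{Br}_{r,t}(\gamma)$: basis oriented Brauer diagrams $\mathbf a\to\mathbf b$ (perfect matchings between bottom row labelled $\mathbf a$ and top row labelled $\mathbf b$; bottom-to-top strands join equal labels, strands within a row join different labels), product by stacking (second factor below), $0$ if labels mismatch, loops replaced by $\gamma$. $1_{\mathbf a}$ identity; for $k\in J$: if $a_k=a_{k+1}$, $s_k1_{\mathbf a}$ crosses strands $k,k+1$ ($\mathbf a\to\mathbf a$); if $a_k\neq a_{k+1}$, $\hat s_k1_{\mathbf a}$ crossing $\mathbf a\to\mathsf s_k\mathbf a$, $e_k1_{\mathbf a}$ cap at bottom $k,k+1$ and cup at top $k,k+1$ ($\mathbf a\to\mathbf a$), $\hat e_k1_{\mathbf a}$ same shape $\mathbf a\to\mathsf s_k\mathbf a$; these are $0$ when the condition fails; $s_k=\sum_{\mathbf a}s_k1_{\mathbf a}$ etc. For $\omega=(\omega_j)_{j\ge0}\subset\mathbb C$, $\mathsf{VBr}_{r,t}(\omega)$ is the quotient of the free product $\mathrm{Br}_{r,t}(\omega_0)*\mathbb C[y_1,\dots,y_{r+t}]$ by: $y_i$ commutes with all $1_{\mathbf a}$, and with $s_k,\hat s_k,e_k,\hat e_k$ when $i\notin\{k,k+1\}$; $e_1y_1^je_11_{\mathbf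 a}=\omega_je_11_{\mathbf a}$ for $j\ge0$ and $(a_1,a_2)=(\wedge,\vee)$; for $a_k=a_{k+1}$: $s_ky_k1_{\mathbf a}-y_{k+1}s_k1_{\mathbf a}=-1_{\mathbf a}$, $s_ky_{k+1}1_{\mathbf a}-y_ks_k1_{\mathbf a}=1_{\mathbf a}$; $\hat s_ky_k-y_{k+1}\hat s_k=\hat e_k$, $\hat s_ky_{k+1}-y_k\hat s_k=-\hat e_k$; $e_k,\hat e_k$ are annihilated on both sides by $y_k+y_{k+1}$. $1_{\mathbf a}M_{\mathbf i}=\{v\in1_{\mathbf a}M:(y_k-\mathrm i_k)^Nv=0\ \forall k,\ N\gg0\}$. *)

theory Defs
  imports "HOL-Analysis.Analysis"
begin

text \<open>A sequence a in Seq r t is a bool list of length r+t; True stands for the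
 label up-arrow (wedge), False for down-arrow (vee). Positions are 1-based:
 entry j of a is lab a j = a ! (j - 1).\<close>

definition lab :: "bool list \<Rightarrow> nat \<Rightarrow> bool" where
  "lab a j = a ! (j - 1)"

definition Seq :: "nat \<Rightarrow> nat \<Rightarrow> bool list set" where
  "Seq r t = {a. length a = r + t \<and> card {j \<in> {1..r+t}. lab a j} = r}"

definition sseq :: "nat \<Rightarrow> bool list \<Rightarrow> bool list" where
  "sseq k a = a[k - 1 := a ! k, k := a ! (k - 1)]"

text \<open>sk k swaps entries k and k+1 of a vector in C^(r+t), vectors being
 functions on the index set {1..r+t} (values elsewhere are irrelevant).\<close>
definition svec :: "nat \<Rightarrow> (nat \<Rightarrow> complex) \<Rightarrow> nat \<Rightarrow> complex" where
  "svec k i = i(k := i (Suc k), Suc k := i k)"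

datatype pt = Bot nat | Top nat

definition pts :: "nat \<Rightarrow> pt set" where
  "pts n = Bot ` {1..n} \<union> Top ` {1..n}"

text \<open>A diagram is a triple (a, b, p): bottom labels a, top labels b and a
 perfect matching p of the points, given as a fixpoint-free involution on
 pts n (identity outside).\<close>
type_synonym diag = "bool list \<times> bool list \<times> (pt \<Rightarrow> pt)"

definition is_diag :: "nat \<Rightarrow> nat \<Rightarrow> diag \<Rightarrow> bool" where
  "is_diag r t D = (case D of (a, b, p) \<Rightarrow>
     a \<in> Seq r t \<and> b \<in> Seq r t \<and>
     (\<forall>x \<in> pts (r+t). p x \<in> pts (r+t) \<and> p x \<noteq> x \<and> p (p x) = x) \<and>
     (\<forall>x. x \<notin> pts (r+t) \<longrightarrow> p x = x) \<and>
     (\<forall>j l. p (Bot j) = Top l \<and> Bot j \<in> pts (r+t) \<longrightarrow> lab a j = lab b l) \<and>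
     (\<forall>j l. p (Bot j) = Bot l \<and> Bot j \<in> pts (r+t) \<longrightarrow> lab a j \<noteq> lab a l) \<and>
     (\<forall>j l. p (Top j) = Top l \<and> Top j \<in> pts (r+t) \<longrightarrow> lab b j \<noteq> lab b l))"

text \<open>Stacking: points of three levels, L0 = bottom of the lower diagram,
 L1 = middle, L2 = top of the upper diagram.\<close>
datatype lv = L0 nat | L1 nat | L2 nat

definition lowmap :: "pt \<Rightarrow> lv" where
  "lowmap x = (case x of Bot j \<Rightarrow> L0 j | Top j \<Rightarrow> L1 j)"
definition upmap :: "pt \<Rightarrow> lv" where
  "upmap x = (case x of Bot j \<Rightarrow> L1 j | Top j \<Rightarrow> L2 j)"

definition stack_edges :: "nat \<Rightarrow> (pt \<Rightarrow> pt) \<Rightarrow> (pt \<Rightarrow> pt) \<Rightarrow> (lv \<times> lv) set" where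
  "stack_edges n p1 p2 =
     {(lowmap x, lowmap (p2 x)) | x. x \<in> pts n} \<union> {(upmap x, upmap (p1 x)) | x. x \<in> pts n}"

definition conn :: "nat \<Rightarrow> (pt \<Rightarrow> pt) \<Rightarrow> (pt \<Rightarrow> pt) \<Rightarrow> (lv \<times> lv) set" where
  "conn n p1 p2 = (stack_edges n p1 p2 \<union> (stack_edges n p1 p2)\<inverse>)\<^sup>*"

definition outer :: "lv \<Rightarrow> pt" where
  "outer x = (case x of L0 j \<Rightarrow> Bot j | L1 j \<Rightarrow> Bot 0 | L2 j \<Rightarrow> Top j)"

definition is_mid :: "lv \<Rightarrow> bool" where
  "is_mid x = (case x of L1 _ \<Rightarrow> True | _ \<Rightarrow> False)"

text \<open>Matching of the product: an outer point is joined to the unique other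
 outer point in its connected component.\<close>
definition comp_match :: "nat \<Rightarrow> (pt \<Rightarrow> pt) \<Rightarrow> (pt \<Rightarrow> pt) \<Rightarrow> pt \<Rightarrow> pt" where
  "comp_match n p1 p2 x =
     (if x \<in> pts n then
        (let u = (case x of Bot j \<Rightarrow> L0 j | Top j \<Rightarrow> L2 j) in
         outer (THE v. v \<noteq> u \<and> \<not> is_mid v \<and> (u, v) \<in> conn n p1 p2))
      else x)"

definition loops :: "nat \<Rightarrow> (pt \<Rightarrow> pt) \<Rightarrow> (pt \<Rightarrow> pt) \<Rightarrow> nat" where
  "loops n p1 p2 = card ((\<lambda>x. conn n p1 p2 `` {x}) `
      {L1 j | j. j \<in> {1..n} \<and> (\<forall>w \<in> conn n p1 p2 `` {L1 j}. is_mid w)})"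

text \<open>Product D1 D2 (D2 stacked below D1), in the case the labels match.\<close>
definition dcomp :: "nat \<Rightarrow> diag \<Rightarrow> diag \<Rightarrow> diag" where
  "dcomp n D1 D2 = (case D1 of (b', c, p1) \<Rightarrow> case D2 of (a, b, p2) \<Rightarrow>
      (a, c, comp_match n p1 p2))"

definition dloops :: "nat \<Rightarrow> diag \<Rightarrow> diag \<Rightarrow> nat" where
  "dloops n D1 D2 = (case D1 of (b', c, p1) \<Rightarrow> case D2 of (a, b, p2) \<Rightarrow> loops n p1 p2)"

definition vert :: "nat \<Rightarrow> pt \<Rightarrow> pt" where
  "vert n x = (if x \<in> pts n then (case x of Bot j \<Rightarrow> Top j | Top j \<Rightarrow> Bot j) else x)"

definition cross_m :: "nat \<Rightarrow> nat \<Rightarrow> pt \<Rightarrow> pt" where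
  "cross_m n k = (vert n)(Bot k := Top (Suc k), Bot (Suc k) := Top k,
                          Top k := Bot (Suc k), Top (Suc k) := Bot k)"

definition cap_m :: "nat \<Rightarrow> nat \<Rightarrow> pt \<Rightarrow> pt" where
  "cap_m n k = (vert n)(Bot k := Bot (Suc k), Bot (Suc k) := Bot k,
                        Top k := Top (Suc k), Top (Suc k) := Top k)"

definition one_d :: "nat \<Rightarrow> bool list \<Rightarrow> diag" where
  "one_d n a = (a, a, vert n)"
definition s_d :: "nat \<Rightarrow> nat \<Rightarrow> bool list \<Rightarrow> diag" where
  "s_d n k a = (a, a, cross_m n k)"
definition sh_d :: "nat \<Rightarrow> nat \<Rightarrow> bool list \<Rightarrow> diag" where
  "sh_d n k a = (a, sseq k a, cross_m n k)"
definition e_d :: "nat \<Rightarrow> nat \<Rightarrow> bool list \<Rightarrow> diag" where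
  "e_d n k a = (a, a, cap_m n k)"
definition eh_d :: "nat \<Rightarrow> nat \<Rightarrow> bool list \<Rightarrow> diag" where
  "eh_d n k a = (a, sseq k a, cap_m n k)"

text \<open>Complex vector spaces are given as an additive group 'v with a scalar
 multiplication sc satisfying the vector space axioms.\<close>
abbreviation clin :: "(complex \<Rightarrow> 'v::ab_group_add \<Rightarrow> 'v) \<Rightarrow> ('v \<Rightarrow> 'v) \<Rightarrow> bool" where
  "clin sc f \<equiv> Vector_Spaces.linear sc sc f"

text \<open>rho gives the action of the basis diagrams of Br_{r,t}(gamma) on V;
 extended linearly this is a unital algebra homomorphism.\<close>
definition Br_module :: "(complex \<Rightarrow> 'v::ab_group_add \<Rightarrow> 'v) \<Rightarrow> nat \<Rightarrow> nat \<Rightarrow> complex \<Rightarrow> (diag \<Rightarrow> 'v::ab_group_add \<Rightarrow> 'v) \<Rightarrow> bool" where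
  "Br_module sc r t \<gamma> \<rho> =
    ((\<forall>D. is_diag r t D \<longrightarrow> clin sc (\<rho> D)) \<and>
     (\<forall>v. (\<Sum>a \<in> Seq r t. \<rho> (one_d (r+t) a) v) = v) \<and>
     (\<forall>D1 D2. is_diag r t D1 \<longrightarrow> is_diag r t D2 \<longrightarrow>
        \<rho> D1 \<circ> \<rho> D2 =
          (if fst D1 = fst (snd D2)
           then (\<lambda>v. sc (\<gamma> ^ dloops (r+t) D1 D2) (\<rho> (dcomp (r+t) D1 D2) v))
           else (\<lambda>v. 0))))"

text \<open>The elements s_k, hat s_k, e_k, hat e_k (sums over all a of the
 diagrams s_k 1_a etc., which are zero when the condition fails).\<close>
definition opS :: "nat \<Rightarrow> nat \<Rightarrow> (diag \<Rightarrow> 'v::ab_group_add \<Rightarrow> 'v) \<Rightarrow> nat \<Rightarrow> 'v \<Rightarrow> 'v" where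
  "opS r t \<rho> k v = (\<Sum>a \<in> {a \<in> Seq r t. lab a k = lab a (Suc k)}. \<rho> (s_d (r+t) k a) v)"
definition opSh :: "nat \<Rightarrow> nat \<Rightarrow> (diag \<Rightarrow> 'v::ab_group_add \<Rightarrow> 'v) \<Rightarrow> nat \<Rightarrow> 'v \<Rightarrow> 'v" where
  "opSh r t \<rho> k v = (\<Sum>a \<in> {a \<in> Seq r t. lab a k \<noteq> lab a (Suc k)}. \<rho> (sh_d (r+t) k a) v)"
definition opE :: "nat \<Rightarrow> nat \<Rightarrow> (diag \<Rightarrow> 'v::ab_group_add \<Rightarrow> 'v) \<Rightarrow> nat \<Rightarrow> 'v \<Rightarrow> 'v" where
  "opE r t \<rho> k v = (\<Sum>a \<in> {a \<in> Seq r t. lab a k \<noteq> lab a (Suc k)}. \<rho> (e_d (r+t) k a) v)"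
definition opEh :: "nat \<Rightarrow> nat \<Rightarrow> (diag \<Rightarrow> 'v::ab_group_add \<Rightarrow> 'v) \<Rightarrow> nat \<Rightarrow> 'v \<Rightarrow> 'v" where
  "opEh r t \<rho> k v = (\<Sum>a \<in> {a \<in> Seq r t. lab a k \<noteq> lab a (Suc k)}. \<rho> (eh_d (r+t) k a) v)"

text \<open>A left VBr_{r,t}(omega)-module structure on V: a Br_{r,t}(omega_0)-module
 structure rho together with commuting linear operators Y 1, ..., Y (r+t)
 (the action of C[y_1,...,y_(r+t)]) satisfying the defining relations.\<close>
definition VBr_module :: "(complex \<Rightarrow> 'v::ab_group_add \<Rightarrow> 'v) \<Rightarrow> nat \<Rightarrow> nat \<Rightarrow> (nat \<Rightarrow> complex) \<Rightarrow>
    (diag \<Rightarrow> 'v::ab_group_add \<Rightarrow> 'v) \<Rightarrow> (nat \<Rightarrow> 'v \<Rightarrow> 'v) \<Rightarrow> bool" where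
  "VBr_module sc r t \<omega> \<rho> Y = (let n = r + t; J = {1..<n};
      one = (\<lambda>a. \<rho> (one_d n a)); S = opS r t \<rho>; Sh = opSh r t \<rho>;
      E = opE r t \<rho>; Eh = opEh r t \<rho> in
    vector_space sc \<and> Br_module sc r t (\<omega> 0) \<rho> \<and>
    (\<forall>i \<in> {1..n}. clin sc (Y i)) \<and>
    (\<forall>i \<in> {1..n}. \<forall>j \<in> {1..n}. Y i \<circ> Y j = Y j \<circ> Y i) \<and>
    (\<forall>i \<in> {1..n}. \<forall>a \<in> Seq r t. Y i \<circ> one a = one a \<circ> Y i) \<and>
    (\<forall>i \<in> {1..n}. \<forall>k \<in> J. i \<notin> {k, Suc k} \<longrightarrow>
        Y i \<circ> S k = S k \<circ> Y i \<and> Y i \<circ> Sh k = Sh k \<circ> Y i \<and>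
        Y i \<circ> E k = E k \<circ> Y i \<and> Y i \<circ> Eh k = Eh k \<circ> Y i) \<and>
    (2 \<le> n \<longrightarrow> (\<forall>j. \<forall>a \<in> Seq r t. lab a 1 \<and> \<not> lab a 2 \<longrightarrow>
        (\<forall>v. E 1 ((Y 1 ^^ j) (E 1 (one a v))) = sc (\<omega> j) (E 1 (one a v))))) \<and>
    (\<forall>k \<in> J. \<forall>a \<in> Seq r t. lab a k = lab a (Suc k) \<longrightarrow> (\<forall>v.
        S k (Y k (one a v)) - Y (Suc k) (S k (one a v)) = - one a v \<and>
        S k (Y (Suc k) (one a v)) - Y k (S k (one a v)) = one a v)) \<and>
    (\<forall>k \<in> J. \<forall>v.
        Sh k (Y k v) - Y (Suc k) (Sh k v) = Eh k v \<and>
        Sh k (Y (Suc k) v) - Y k (Sh k v) = - Eh k v) \<and>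
    (\<forall>k \<in> J. \<forall>v.
        Y k (E k v) + Y (Suc k) (E k v) = 0 \<and> E k (Y k v + Y (Suc k) v) = 0 \<and>
        Y k (Eh k v) + Y (Suc k) (Eh k v) = 0 \<and> Eh k (Y k v + Y (Suc k) v) = 0))"

definition wt_space :: "(complex \<Rightarrow> 'v::ab_group_add \<Rightarrow> 'v) \<Rightarrow> nat \<Rightarrow> (diag \<Rightarrow> 'v::ab_group_add \<Rightarrow> 'v) \<Rightarrow> (nat \<Rightarrow> 'v \<Rightarrow> 'v) \<Rightarrow>
    bool list \<Rightarrow> (nat \<Rightarrow> complex) \<Rightarrow> 'v set" where
  "wt_space sc n \<rho> Y a i = {v \<in> range (\<rho> (one_d n a)).
     \<forall>k \<in> {1..n}. \<exists>N. ((\<lambda>w. Y k w - sc (i k) w) ^^ N) v = 0}"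

definition sum_spaces :: "'c set \<Rightarrow> ('c \<Rightarrow> 'v::ab_group_add set) \<Rightarrow> 'v set" where
  "sum_spaces I W = {v. \<exists>F f. finite F \<and> F \<subseteq> I \<and> (\<forall>c \<in> F. f c \<in> W c) \<and> v = (\<Sum>c \<in> F. f c)}"

definition fin_dim :: "(complex \<Rightarrow> 'v::ab_group_add \<Rightarrow> 'v) \<Rightarrow> bool" where
  "fin_dim sc = (\<exists>B :: 'v set. finite B \<and> module.span sc B = UNIV)"

end

(* For j other than k, k+1 the operator y_j commutes with hat s_k, so the j-th generalised
   eigenvalue is preserved. The remaining information comes from the relations
   hat s_k y_k - y_(k+1) hat s_k = hat e_k,  hat s_k y_(k+1) - y_k hat s_k = - hat e_k  and
   hat e_k (y_k + y_(k+1)) = 0.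
   If i_k + i_(k+1) is nonzero, y_k + y_(k+1) - (i_k + i_(k+1)) is nilpotent on 1_a M_i while
   hat e_k kills y_k + y_(k+1), so hat e_k vanishes on 1_a M_i; there hat s_k then intertwines
   y_(k+1) with y_k and y_k with y_(k+1), which swaps the two eigenvalues.
   If i_k + i_(k+1) = 0, hat s_k commutes with y_k + y_(k+1), which is nilpotent on 1_a M_i.
   Splitting the image into generalised eigenspaces of y_k (finite dimension, C algebraically
   closed) yields components whose eigenvalues at positions k, k+1 are l and -l. *)

theory Submission
  imports Defs "HOL-Computational_Algebra.Fundamental_Theorem_Algebra"
begin

section \<open>Generalised kernels\<close>

definition gen_ker :: "('v \<Rightarrow> 'v::zero) \<Rightarrow> 'v set" where
  "gen_ker f = {w. \<exists>N. (f ^^ N) w = 0}"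

abbreviation shift :: "('a \<Rightarrow> 'v \<Rightarrow> 'v) \<Rightarrow> ('v \<Rightarrow> 'v) \<Rightarrow> 'a \<Rightarrow> 'v \<Rightarrow> 'v::minus" where
  "shift sc f c \<equiv> \<lambda>w. f w - sc c w"

lemma funpow_intertwine_on:
  assumes "w \<in> W" and "\<And>u. u \<in> W \<Longrightarrow> f u \<in> W" and "\<And>u. u \<in> W \<Longrightarrow> S (f u) = g (S u)"
  shows "S ((f ^^ N) w) = (g ^^ N) (S w) \<and> (f ^^ N) w \<in> W"
  by (induction N) (use assms in auto)

lemma gen_ker_intertwine_on:
  assumes "w \<in> gen_ker f" and "w \<in> W" and "\<And>u. u \<in> W \<Longrightarrow> f u \<in> W"
    and "\<And>u. u \<in> W \<Longrightarrow> S (f u) = g (S u)" and "S 0 = 0"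
  shows "S w \<in> gen_ker g"
proof -
  obtain N where "(f ^^ N) w = 0" using assms(1) by (auto simp: gen_ker_def)
  then have "(g ^^ N) (S w) = 0"
    using funpow_intertwine_on[of w W f S g N] assms(2-5) by metis
  then show ?thesis by (auto simp: gen_ker_def)
qed

lemma zero_in_gen_ker [simp]: "0 \<in> gen_ker f"
  unfolding gen_ker_def by (auto intro: exI[of _ 0])

lemma gen_ker_preimage: "f w \<in> gen_ker f \<Longrightarrow> w \<in> gen_ker f"
proof -
  assume "f w \<in> gen_ker f"
  then obtain N where "(f ^^ N) (f w) = 0" by (auto simp: gen_ker_def)
  then have "(f ^^ Suc N) w = 0" by (simp only: funpow_Suc_right o_apply)
  then show ?thesis unfolding gen_ker_def by blast
qed

lemma gen_ker_commute:
  assumes "w \<in> gen_ker f" and "\<And>u. S (f u) = f (S u)" and "S 0 = 0"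
  shows "S w \<in> gen_ker f"
  using gen_ker_intertwine_on[of w f UNIV S f] assms by simp

context vector_space
begin

interpretation endo: vector_space_pair scale scale ..

lemma funpow_scale_comp:
  assumes "Vector_Spaces.linear scale scale f"
  shows "((\<lambda>u. scale c (f u)) ^^ N) w = scale (c ^ N) ((f ^^ N) w)"
  by (induction N) (simp_all add: endo.linear_scale[OF assms])

lemma gen_ker_scale_comp:
  assumes "Vector_Spaces.linear scale scale f" and "w \<in> gen_ker f"
  shows "w \<in> gen_ker (\<lambda>u. scale c (f u))"
  using assms by (auto simp: gen_ker_def funpow_scale_comp)

lemma gen_ker_scale: "c \<noteq> 0 \<Longrightarrow> gen_ker (\<lambda>u. scale c u) = {0}"
  using funpow_scale_comp[OF linear_id, where c=c] by (auto simp: gen_ker_def)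

lemma linear_funpow:
  "Vector_Spaces.linear scale scale f \<Longrightarrow> Vector_Spaces.linear scale scale (f ^^ N)"
  by (induction N) (auto simp: linear_id intro: Vector_Spaces.linear_compose)

lemma funpow_add_zero:
  assumes "Vector_Spaces.linear scale scale f" and "(f ^^ N) w = 0"
  shows "(f ^^ (M + N)) w = 0"
  using endo.linear_0[OF linear_funpow[OF assms(1)]] assms(2)
  by (simp add: funpow_add)

lemma subspace_gen_ker:
  assumes f: "Vector_Spaces.linear scale scale f"
  shows "subspace (gen_ker f)"
proof (rule subspaceI)
  show "0 \<in> gen_ker f" by simp
next
  fix u w assume "u \<in> gen_ker f" "w \<in> gen_ker f"
  then obtain M N where "(f ^^ M) u = 0" "(f ^^ N) w = 0" by (auto simp: gen_ker_def)
  then have "(f ^^ (N + M)) u = 0" "(f ^^ (M + N)) w = 0" using funpow_add_zero[OF f] by blast+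
  then have "(f ^^ (M + N)) (u + w) = 0"
    by (simp add: endo.linear_add[OF linear_funpow[OF f]] add.commute)
  then show "u + w \<in> gen_ker f" by (auto simp: gen_ker_def)
next
  fix c w assume "w \<in> gen_ker f"
  then show "scale c w \<in> gen_ker f"
    by (rule gen_ker_commute) (simp_all add: endo.linear_scale[OF f])
qed

lemma shift_linear:
  "Vector_Spaces.linear scale scale x \<Longrightarrow> Vector_Spaces.linear scale scale (shift scale x c)"
  by (rule endo.linear_compose_sub[OF _ linear_scale_self])

lemma shift_commute:
  assumes "Vector_Spaces.linear scale scale f" and "\<And>u. f (g u) = g (f u)"
  shows "f (shift scale g c u) = shift scale g c (f u)"
  using assms by (simp add: endo.linear_diff endo.linear_scale)

lemma funpow_add_eq_0_commuting:
  assumes A: "Vector_Spaces.linear scale scale A" and B: "Vector_Spaces.linear scale scale B"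
    and AB: "\<And>u. A (B u) = B (A u)"
  shows "(A ^^ m) w = 0 \<Longrightarrow> (B ^^ n) w = 0 \<Longrightarrow> ((\<lambda>u. A u + B u) ^^ (m + n)) w = 0"
proof (induction "m + n" arbitrary: m n w rule: less_induct)
  case less
  let ?D = "\<lambda>u. A u + B u"
  have D: "Vector_Spaces.linear scale scale ?D" by (rule endo.linear_compose_add[OF A B])
  show ?case
  proof (cases "m = 0 \<or> n = 0")
    case True
    then have "w = 0" using less.prems by auto
    then show ?thesis using endo.linear_0[OF linear_funpow[OF D]] by simp
  next
    case False
    then obtain m' n' where mn: "m = Suc m'" "n = Suc n'" by (metis not0_implies_Suc)
    have "(B ^^ n) (A w) = 0"
      using funpow_intertwine_on[of w UNIV B A B "n"] AB less.prems(2) endo.linear_0[OF A]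
      by auto
    then have DA: "(?D ^^ (m' + n)) (A w) = 0"
      using less.hyps[of m' n] less.prems(1) mn by (simp add: funpow_swap1)
    have "(A ^^ m) (B w) = 0"
      using funpow_intertwine_on[of w UNIV A B A "m"] AB less.prems(1) endo.linear_0[OF B]
      by auto
    then have DB: "(?D ^^ (m + n')) (B w) = 0"
      using less.hyps[of m n'] less.prems(2) mn by (simp add: funpow_swap1)
    have "(?D ^^ (m + n)) w = (?D ^^ (m' + n)) (A w + B w)"
      by (simp only: mn add_Suc funpow_Suc_right o_apply)
    also have "\<dots> = (?D ^^ (m' + n)) (A w) + (?D ^^ (m' + n)) (B w)"
      by (rule endo.linear_add[OF linear_funpow[OF D]])
    also have "\<dots> = 0" using DA DB mn by simp
    finally show ?thesis .
  qed
qed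

lemma gen_ker_add:
  assumes A: "Vector_Spaces.linear scale scale A" and B: "Vector_Spaces.linear scale scale B"
    and AB: "\<And>u. A (B u) = B (A u)" and "w \<in> gen_ker A" and "w \<in> gen_ker B"
  shows "w \<in> gen_ker (\<lambda>u. A u + B u)"
proof -
  obtain m n where "(A ^^ m) w = 0" "(B ^^ n) w = 0" using assms(4,5) unfolding gen_ker_def by blast
  then have "((\<lambda>u. A u + B u) ^^ (m + n)) w = 0" by (rule funpow_add_eq_0_commuting[OF A B AB])
  then show ?thesis unfolding gen_ker_def by blast
qed

lemma shift_shift_commute:
  assumes x: "Vector_Spaces.linear scale scale x" and y: "Vector_Spaces.linear scale scale y"
    and xy: "\<And>u. x (y u) = y (x u)"
  shows "shift scale x \<alpha> (shift scale y \<beta> u) = shift scale y \<beta> (shift scale x \<alpha> u)"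
  using xy by (simp add: endo.linear_diff[OF x] endo.linear_diff[OF y] endo.linear_scale[OF x]
      endo.linear_scale[OF y] algebra_simps)

lemma gen_ker_shift_add:
  assumes x: "Vector_Spaces.linear scale scale x" and y: "Vector_Spaces.linear scale scale y"
    and xy: "\<And>u. x (y u) = y (x u)"
    and "w \<in> gen_ker (shift scale x \<alpha>)" and "w \<in> gen_ker (shift scale y \<beta>)"
  shows "w \<in> gen_ker (shift scale (\<lambda>u. x u + y u) (\<alpha> + \<beta>))"
proof -
  have "shift scale (\<lambda>u. x u + y u) (\<alpha> + \<beta>) = (\<lambda>u. shift scale x \<alpha> u + shift scale y \<beta> u)"
    by (simp add: fun_eq_iff scale_left_distrib algebra_simps)
  then show ?thesis
    using gen_ker_add[of "shift scale x \<alpha>" "shift scale y \<beta>",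
        OF shift_linear[OF x] shift_linear[OF y] shift_shift_commute[OF x y xy] assms(4,5)]
    by simp
qed

lemma gen_ker_shift_complement:
  assumes x: "Vector_Spaces.linear scale scale x" and y: "Vector_Spaces.linear scale scale y"
    and xy: "\<And>u. x (y u) = y (x u)"
    and "w \<in> gen_ker (\<lambda>u. x u + y u)" and "w \<in> gen_ker (shift scale x \<alpha>)"
  shows "w \<in> gen_ker (shift scale y (- \<alpha>))"
proof -
  let ?P = "\<lambda>u. x u + y u" and ?N = "\<lambda>u. scale (- 1) (shift scale x \<alpha> u)"
  have P: "Vector_Spaces.linear scale scale ?P" by (rule endo.linear_compose_add[OF x y])
  have N: "Vector_Spaces.linear scale scale ?N"
    by (rule endo.linear_compose_scale_right[OF shift_linear[OF x]])
  have "?P (?N u) = ?N (?P u)" for u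
    using xy by (simp add: endo.linear_add[OF x] endo.linear_add[OF y] endo.linear_diff[OF x]
        endo.linear_diff[OF y] endo.linear_scale[OF x] endo.linear_scale[OF y] algebra_simps)
  moreover have "w \<in> gen_ker ?N" by (rule gen_ker_scale_comp[OF shift_linear[OF x] assms(5)])
  moreover have "shift scale y (- \<alpha>) = (\<lambda>u. ?P u + ?N u)"
    by (simp add: fun_eq_iff scale_minus_left algebra_simps)
  ultimately show ?thesis using gen_ker_add[of ?P ?N, OF P N _ assms(4)] by simp
qed

lemma vanishes_on_gen_eigenspace:
  assumes x: "Vector_Spaces.linear scale scale x" and y: "Vector_Spaces.linear scale scale y"
    and E: "Vector_Spaces.linear scale scale E"
    and xy: "\<And>u. x (y u) = y (x u)" and E_sum: "\<And>u. E (x u + y u) = 0" and "\<alpha> + \<beta> \<noteq> 0"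
    and "w \<in> gen_ker (shift scale x \<alpha>)" and "w \<in> gen_ker (shift scale y \<beta>)"
  shows "E w = 0"
proof -
  have "E (shift scale (\<lambda>u. x u + y u) (\<alpha> + \<beta>) u) = scale (- (\<alpha> + \<beta>)) (E u)" for u
    using E_sum
    by (simp only: endo.linear_diff[OF E] endo.linear_scale[OF E] scale_minus_left diff_0)
  then have "E w \<in> gen_ker (\<lambda>u. scale (- (\<alpha> + \<beta>)) u)"
    using gen_ker_intertwine_on[OF gen_ker_shift_add[OF x y xy assms(7,8)], of UNIV E]
      endo.linear_0[OF E] by simp
  moreover have "- (\<alpha> + \<beta>) \<noteq> 0" using assms(6) neg_equal_0_iff_equal by blast
  ultimately show ?thesis using gen_ker_scale by blast
qed

lemma intertwiner_gen_ker:
  assumes x: "Vector_Spaces.linear scale scale x" and y: "Vector_Spaces.linear scale scale y"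
    and S: "Vector_Spaces.linear scale scale S" and E: "Vector_Spaces.linear scale scale E"
    and xy: "\<And>u. x (y u) = y (x u)" and E_sum: "\<And>u. E (x u + y u) = 0"
    and S_twist: "\<And>u. E u = 0 \<Longrightarrow> S (y u) = x (S u)" and "\<alpha> + \<beta> \<noteq> 0"
    and "w \<in> gen_ker (shift scale x \<alpha>)" and "w \<in> gen_ker (shift scale y \<beta>)"
  shows "S w \<in> gen_ker (shift scale x \<beta>)"
proof -
  let ?Y = "shift scale y \<beta>"
  let ?W = "gen_ker (shift scale x \<alpha>) \<inter> gen_ker ?Y"
  have Y0: "?Y 0 = 0" by (rule endo.linear_0[OF shift_linear[OF y]])
  show ?thesis
  proof (rule gen_ker_intertwine_on[OF assms(10)])
    show "w \<in> ?W" using assms(9,10) by blast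
    show "?Y u \<in> ?W" if "u \<in> ?W" for u
    proof
      show "?Y u \<in> gen_ker (shift scale x \<alpha>)"
        using that shift_shift_commute[OF x y xy] Y0
        by (intro gen_ker_commute[of u "shift scale x \<alpha>" ?Y]) auto
      show "?Y u \<in> gen_ker ?Y" using that Y0 by (intro gen_ker_commute[of u ?Y ?Y]) auto
    qed
    show "S (?Y u) = shift scale x \<beta> (S u)" if "u \<in> ?W" for u
    proof -
      have "E u = 0"
        by (rule vanishes_on_gen_eigenspace[OF x y E xy E_sum assms(8)]) (use that in auto)
      then show ?thesis using S_twist by (simp add: endo.linear_diff[OF S] endo.linear_scale[OF S])
    qed
    show "S 0 = 0" by (rule endo.linear_0[OF S])
  qed
qed

section \<open>Decomposition into generalised eigenspaces\<close>

lemma shift_surj_on_gen_eigenspace: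
  assumes x: "Vector_Spaces.linear scale scale x" and U: "subspace U" "\<And>u. u \<in> U \<Longrightarrow> x u \<in> U"
    and "\<nu> \<noteq> z" and "f \<in> U \<inter> gen_ker (shift scale x \<nu>)"
  shows "\<exists>g \<in> U \<inter> gen_ker (shift scale x \<nu>). shift scale x z g = f"
proof -
  let ?T = "shift scale x \<nu>"
  have T: "Vector_Spaces.linear scale scale ?T" by (rule shift_linear[OF x])
  have "f \<in> U \<Longrightarrow> (?T ^^ N) f = 0 \<Longrightarrow> \<exists>g \<in> U. (?T ^^ N) g = 0 \<and> shift scale x z g = f" for N f
  proof (induction N arbitrary: f)
    case 0
    then show ?case using subspace_0[OF U(1)] endo.linear_0[OF x] by auto
  next
    case (Suc N)
    have "?T f \<in> U" using Suc.prems(1) U by (simp add: subspace_diff subspace_scale)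
    moreover have "(?T ^^ N) (?T f) = 0" using Suc.prems(2) by (simp only: funpow_Suc_right o_apply)
    ultimately obtain g' where g': "g' \<in> U" "(?T ^^ N) g' = 0" "shift scale x z g' = ?T f"
      using Suc.IH by blast
    \<comment> \<open>\<open>x - z = (\<nu> - z) + (x - \<nu>)\<close>, so \<open>g\<close> below solves \<open>(x - z) g = f\<close>\<close>
    define g where "g = scale (1 / (\<nu> - z)) (f - g')"
    have "g \<in> U"
      unfolding g_def using U(1) Suc.prems(1) g'(1) by (simp add: subspace_diff subspace_scale)
    moreover have "(?T ^^ Suc N) g = 0"
      using g'(2) Suc.prems(2) endo.linear_0[OF T] unfolding g_def
      by (simp only: endo.linear_scale[OF linear_funpow[OF T]]
          endo.linear_diff[OF linear_funpow[OF T]])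
        (simp add: funpow_swap1)
    moreover have "shift scale x z g = f"
    proof -
      have "shift scale x z g = scale (1 / (\<nu> - z)) (shift scale x z f - shift scale x z g')"
        unfolding g_def by (simp add: endo.linear_diff[OF x] endo.linear_scale[OF x] algebra_simps)
      also have "\<dots> = scale (1 / (\<nu> - z)) (shift scale x z f - shift scale x \<nu> f)"
        using g'(3) by simp
      also have "\<dots> = scale (1 / (\<nu> - z)) (scale (\<nu> - z) f)"
        by (simp add: scale_left_diff_distrib)
      also have "\<dots> = f" using assms(4) by simp
      finally show ?thesis .
    qed
    ultimately show ?case by blast
  qed
  then show ?thesis using assms(5) unfolding gen_ker_def by blast
qed

lemma shift_preimage_in_sum_gen_eigenspaces:
  assumes x: "Vector_Spaces.linear scale scale x" and U: "subspace U" "\<And>u. u \<in> U \<Longrightarrow> x u \<in> U"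
    and "u \<in> U" and "shift scale x z u \<in> sum_spaces UNIV (\<lambda>c. U \<inter> gen_ker (shift scale x c))"
  shows "u \<in> sum_spaces UNIV (\<lambda>c. U \<inter> gen_ker (shift scale x c))"
proof -
  let ?E = "\<lambda>c. U \<inter> gen_ker (shift scale x c)" and ?S = "shift scale x z"
  obtain F f where F: "finite F" "\<forall>l\<in>F. f l \<in> ?E l" "?S u = (\<Sum>l\<in>F. f l)"
    using assms(5) unfolding sum_spaces_def by blast
  have "\<forall>l\<in>F - {z}. \<exists>g. g \<in> ?E l \<and> ?S g = f l"
  proof
    fix l assume "l \<in> F - {z}"
    then have "\<exists>g \<in> ?E l. ?S g = f l"
      using F(2) by (intro shift_surj_on_gen_eigenspace[OF x U]) auto
    then show "\<exists>g. g \<in> ?E l \<and> ?S g = f l" by blast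
  qed
  then obtain g where g: "\<forall>l\<in>F - {z}. g l \<in> ?E l \<and> ?S (g l) = f l"
    by (rule bchoice[THEN exE])
  define h where "h = u - (\<Sum>l\<in>F - {z}. g l)"
  have "h \<in> U" unfolding h_def
    by (intro subspace_diff[OF U(1) assms(4)] subspace_sum[OF U(1)]) (use g in blast)
  have S: "Vector_Spaces.linear scale scale ?S" by (rule shift_linear[OF x])
  have "?S h = ?S u - (\<Sum>l\<in>F - {z}. ?S (g l))"
    unfolding h_def by (simp only: endo.linear_diff[OF S] endo.linear_sum[OF S])
  also have "\<dots> = (\<Sum>l\<in>F. f l) - (\<Sum>l\<in>F - {z}. f l)" using g F(3) by simp
  also have "\<dots> = (if z \<in> F then f z else 0)" using F(1) by (simp add: sum.remove)
  finally have "?S h \<in> gen_ker ?S" using F(2) by auto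
  then have "h \<in> ?E z" using \<open>h \<in> U\<close> gen_ker_preimage[of ?S h] by blast
  define f' where "f' l = (if l = z then h else g l)" for l
  have "u = (\<Sum>l\<in>insert z F. f' l)"
    using F(1) by (simp add: sum.insert_remove f'_def h_def)
  moreover have "\<forall>l\<in>insert z F. f' l \<in> ?E l"
    using g \<open>h \<in> ?E z\<close> by (auto simp: f'_def)
  ultimately show ?thesis unfolding sum_spaces_def
    by (intro CollectI exI[of _ "insert z F"] exI[of _ f']) (simp add: F(1))
qed

end

definition poly_op :: "('a \<Rightarrow> 'v \<Rightarrow> 'v::comm_monoid_add) \<Rightarrow> 'a::zero poly \<Rightarrow> ('v \<Rightarrow> 'v) \<Rightarrow> 'v \<Rightarrow> 'v" where
  "poly_op sc p f w = (\<Sum>j\<le>degree p. sc (coeff p j) ((f ^^ j) w))"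

context vector_space
begin

interpretation endo: vector_space_pair scale scale ..

context
  fixes f assumes f: "Vector_Spaces.linear scale scale f"
begin

lemma poly_op_bound:
  assumes "degree p \<le> m"
  shows "poly_op scale p f w = (\<Sum>j\<le>m. scale (coeff p j) ((f ^^ j) w))"
  unfolding poly_op_def
  by (rule sum.mono_neutral_left) (use assms in \<open>auto simp: coeff_eq_0\<close>)

lemma poly_op_0 [simp]: "poly_op scale 0 f w = 0"
  by (simp add: poly_op_def)

lemma poly_op_pCons: "poly_op scale (pCons a p) f w = scale a w + f (poly_op scale p f w)"
proof -
  have "poly_op scale (pCons a p) f w =
      (\<Sum>j\<le>Suc (degree p). scale (coeff (pCons a p) j) ((f ^^ j) w))"
    by (rule poly_op_bound) (simp add: degree_pCons_le)
  also have "\<dots> = scale a w + f (poly_op scale p f w)"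
    by (subst sum.atMost_Suc_shift)
      (simp add: poly_op_def endo.linear_sum[OF f] endo.linear_scale[OF f])
  finally show ?thesis .
qed

lemma poly_op_add: "poly_op scale (p + q) f w = poly_op scale p f w + poly_op scale q f w"
proof (induction p arbitrary: q rule: pCons_induct)
  case (pCons a p)
  obtain b q' where "q = pCons b q'" by (cases q)
  then show ?case
    by (simp add: poly_op_pCons pCons.IH endo.linear_add[OF f] scale_left_distrib algebra_simps)
qed simp

lemma poly_op_smult: "poly_op scale (smult c p) f w = scale c (poly_op scale p f w)"
  by (induction p rule: pCons_induct)
    (simp_all add: poly_op_pCons endo.linear_scale[OF f] scale_right_distrib)

lemma poly_op_mult: "poly_op scale (p * q) f w = poly_op scale p f (poly_op scale q f w)"
  by (induction p rule: pCons_induct) (simp_all add: poly_op_pCons poly_op_add poly_op_smult)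

lemma poly_op_sum: "poly_op scale (\<Sum>i\<in>A. p i) f w = (\<Sum>i\<in>A. poly_op scale (p i) f w)"
  by (induction A rule: infinite_finite_induct) (simp_all add: poly_op_add)

lemma poly_op_monom: "poly_op scale (monom c j) f w = scale c ((f ^^ j) w)"
proof -
  have "poly_op scale (monom c j) f w = (\<Sum>i\<le>j. scale (coeff (monom c j) i) ((f ^^ i) w))"
    by (rule poly_op_bound) (simp add: degree_monom_le)
  also have "\<dots> = scale c ((f ^^ j) w)"
    by (simp add: coeff_monom if_distrib[of "\<lambda>c. scale c _"] cong: if_cong)
  finally show ?thesis .
qed

lemma poly_op_linear_factor: "poly_op scale [:- z, 1:] f w = shift scale f z w"
  by (simp add: poly_op_pCons endo.linear_0[OF f] scale_minus_left)

end

lemma annihilating_poly_exists: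
  assumes f: "Vector_Spaces.linear scale scale f" and B: "finite B" "span B = UNIV"
  shows "\<exists>p. p \<noteq> 0 \<and> poly_op scale p f u = 0"
proof -
  define d where "d = card B"
  define v where "v j = (f ^^ j) u" for j
  show ?thesis
  proof (cases "inj_on v {..d}")
    case True
    have "dependent (v ` {..d})"
    proof (rule ccontr)
      assume "independent (v ` {..d})"
      then have "card (v ` {..d}) \<le> card B" using independent_span_bound[OF B(1)] B(2) by blast
      then show False using True by (simp add: card_image d_def)
    qed
    then obtain c where c: "\<exists>w \<in> v ` {..d}. c w \<noteq> 0" "(\<Sum>w\<in>v ` {..d}. scale (c w) w) = 0"
      using dependent_finite by blast
    define p where "p = (\<Sum>j\<le>d. monom (c (v j)) j)"
    have "poly_op scale p f u = (\<Sum>j\<le>d. scale (c (v j)) (v j))"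
      unfolding p_def v_def by (simp add: poly_op_sum[OF f] poly_op_monom[OF f])
    also have "\<dots> = 0" using c(2) by (simp add: sum.reindex[OF True])
    finally have "poly_op scale p f u = 0" .
    moreover obtain j where "j \<le> d" "c (v j) \<noteq> 0" using c(1) by blast
    then have "coeff p j \<noteq> 0" by (simp add: p_def coeff_sum coeff_monom)
    then have "p \<noteq> 0" by auto
    ultimately show ?thesis by blast
  next
    case False
    then obtain i j where ij: "i \<noteq> j" "v i = v j" unfolding inj_on_def by blast
    define p where "p = monom (1 :: 'a) i - monom 1 j"
    have "coeff p i \<noteq> 0" using ij(1) by (simp add: p_def coeff_monom)
    then have "p \<noteq> 0" by auto
    moreover have "poly_op scale p f u = 0"
      using poly_op_add[OF f, of p "monom 1 j" u] ij(2)
      by (simp add: p_def poly_op_monom[OF f] v_def)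
    ultimately show ?thesis by blast
  qed
qed

end

lemma gen_eigenspace_decomposition_poly:
  fixes sc :: "complex \<Rightarrow> 'v::ab_group_add \<Rightarrow> 'v"
  assumes x: "clin sc x" and U: "module.subspace sc U" "\<And>u. u \<in> U \<Longrightarrow> x u \<in> U"
  shows "p \<noteq> 0 \<Longrightarrow> u \<in> U \<Longrightarrow> poly_op sc p x u = 0 \<Longrightarrow>
    u \<in> sum_spaces UNIV (\<lambda>c. U \<inter> gen_ker (shift sc x c))"
proof (induction "degree p" arbitrary: p u rule: less_induct)
  case less
  interpret vector_space sc using x by (simp add: Vector_Spaces.linear_iff)
  show ?case
  proof (cases "degree p = 0")
    case True
    then have "sc (coeff p 0) u = 0" using less.prems(3) poly_op_bound[OF x, of p 0] by simp
    moreover have "coeff p 0 \<noteq> 0" using less.prems(1) True by (metis leading_coeff_0_iff)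
    ultimately have "u = 0" by simp
    then show ?thesis unfolding sum_spaces_def by (intro CollectI exI[of _ "{}"]) simp
  next
    case False
    then have "\<not> constant (poly p)" by (simp add: constant_degree)
    then obtain z where "poly p z = 0" using fundamental_theorem_of_algebra by blast
    then have "[:-z, 1:] dvd p" by (simp add: poly_eq_0_iff_dvd)
    then obtain q where pq: "p = q * [:-z, 1:]" by (auto elim: dvdE simp: mult.commute)
    have "q \<noteq> 0" using less.prems(1) pq by auto
    moreover from this have "degree q < degree p" unfolding pq by (subst degree_mult_eq) auto
    moreover have "shift sc x z u \<in> U"
      using less.prems(2) U by (simp add: subspace_diff subspace_scale)
    moreover have "poly_op sc q x (shift sc x z u) = 0"
      using less.prems(3) unfolding pq poly_op_mult[OF x] poly_op_linear_factor[OF x] .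
    ultimately have "shift sc x z u \<in> sum_spaces UNIV (\<lambda>c. U \<inter> gen_ker (shift sc x c))"
      by (intro less.hyps) auto
    with U(2) show ?thesis
      by (rule shift_preimage_in_sum_gen_eigenspaces[OF x U(1) _ less.prems(2)])
  qed
qed

lemma gen_eigenspace_decomposition:
  fixes sc :: "complex \<Rightarrow> 'v::ab_group_add \<Rightarrow> 'v"
  assumes "fin_dim sc" and x: "clin sc x"
    and U: "module.subspace sc U" "\<And>u. u \<in> U \<Longrightarrow> x u \<in> U" and "u \<in> U"
  shows "u \<in> sum_spaces UNIV (\<lambda>c. U \<inter> gen_ker (shift sc x c))"
proof -
  interpret vector_space sc using x by (simp add: Vector_Spaces.linear_iff)
  obtain B where "finite B" "span B = UNIV" using assms(1) unfolding fin_dim_def by blast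
  then obtain p where "p \<noteq> 0" "poly_op sc p x u = 0"
    using annihilating_poly_exists[OF x] by blast
  then show ?thesis using gen_eigenspace_decomposition_poly[OF x U] assms(5) by blast
qed

lemma sum_spaces_reindex:
  assumes "inj_on g L" and "g ` L \<subseteq> I" and "\<And>l. l \<in> L \<Longrightarrow> W l \<subseteq> W' (g l)"
  shows "sum_spaces L W \<subseteq> sum_spaces I W'"
proof
  fix v assume "v \<in> sum_spaces L W"
  then obtain F f where F: "finite F" "F \<subseteq> L" "\<forall>l\<in>F. f l \<in> W l" "v = (\<Sum>l\<in>F. f l)"
    unfolding sum_spaces_def by blast
  let ?f = "\<lambda>c. f (inv_into L g c)"
  have inj: "inj_on g F" using assms(1) F(2) by (rule inj_on_subset)
  have "v = (\<Sum>c\<in>g ` F. ?f c)"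
    using F(2,4) assms(1) by (simp add: sum.reindex[OF inj] subset_iff)
  moreover have "\<forall>c\<in>g ` F. ?f c \<in> W' c"
  proof
    fix c assume "c \<in> g ` F"
    then obtain l where l: "l \<in> F" "c = g l" by blast
    then have "l \<in> L" using F(2) by blast
    then have "?f c = f l" using l(2) inv_into_f_f[OF assms(1)] by simp
    then show "?f c \<in> W' c" using F(3) assms(3) l \<open>l \<in> L\<close> by auto
  qed
  moreover have "g ` F \<subseteq> I" using F(2) assms(2) by blast
  ultimately show "v \<in> sum_spaces I W'"
    unfolding sum_spaces_def using F(1) by (intro CollectI exI[of _ "g ` F"] exI[of _ ?f]) simp
qed

section \<open>Sequences and diagrams\<close>

lemma lab_sseq:
  assumes "length a = n" and "k \<in> {1..<n}" and "j \<in> {1..n}"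
  shows "lab (sseq k a) j = lab a (Transposition.transpose k (Suc k) j)"
  using assms unfolding lab_def sseq_def Transposition.transpose_def by (auto simp: nth_list_update)

lemma finite_Seq: "finite (Seq r t)"
proof (rule finite_subset)
  show "Seq r t \<subseteq> {xs. set xs \<subseteq> UNIV \<and> length xs = r + t}" by (auto simp: Seq_def)
  show "finite {xs. set xs \<subseteq> (UNIV :: bool set) \<and> length xs = r + t}"
    by (rule finite_lists_length_eq) simp
qed

lemma sseq_in_Seq:
  assumes a: "a \<in> Seq r t" and k: "k \<in> {1..<r+t}"
  shows "sseq k a \<in> Seq r t"
proof -
  let ?\<tau> = "Transposition.transpose k (Suc k)"
  have len: "length a = r + t" using a by (simp add: Seq_def)
  have "j \<in> {1..r+t} \<longleftrightarrow> ?\<tau> j \<in> {1..r+t}" for j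
    using k by (auto simp: Transposition.transpose_def)
  then have "{j \<in> {1..r+t}. lab (sseq k a) j} = ?\<tau> ` {j \<in> {1..r+t}. lab a j}"
    by (auto simp only: in_transpose_image_iff lab_sseq[OF len k] mem_Collect_eq
        transpose_involutory)
  then show ?thesis using a len by (simp add: Seq_def sseq_def card_image)
qed

lemma pts_Bot [simp]: "Bot j \<in> pts n \<longleftrightarrow> j \<in> {1..n}"
  by (auto simp: pts_def)

lemma pts_Top [simp]: "Top j \<in> pts n \<longleftrightarrow> j \<in> {1..n}"
  by (auto simp: pts_def)

lemma pts_cases:
  assumes "x \<in> pts n"
  obtains j where "x = Bot j" "j \<in> {1..n}" | j where "x = Top j" "j \<in> {1..n}"
  using assms by (auto simp: pts_def)

lemma is_diag_one_d: "a \<in> Seq r t \<Longrightarrow> is_diag r t (one_d (r+t) a)"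
  unfolding is_diag_def one_d_def
  by (auto simp: vert_def elim!: pts_cases split: pt.splits)

lemma is_diag_sh_d:
  assumes a: "a \<in> Seq r t" and k: "k \<in> {1..<r+t}"
  shows "is_diag r t (sh_d (r+t) k a)"
proof -
  have len: "length a = r + t" using a by (simp add: Seq_def)
  show ?thesis
    unfolding is_diag_def sh_d_def using a sseq_in_Seq[OF a k] k
    by (auto simp: cross_m_def vert_def lab_sseq[OF len k]
        elim!: pts_cases split: pt.splits if_splits)
qed

section \<open>Weight spaces of \<open>VBr\<close>-modules\<close>

locale VBr_rep =
  fixes sc :: "complex \<Rightarrow> 'v::ab_group_add \<Rightarrow> 'v" and r t :: nat and \<omega> :: "nat \<Rightarrow> complex"
    and \<rho> :: "diag \<Rightarrow> 'v \<Rightarrow> 'v" and Y :: "nat \<Rightarrow> 'v \<Rightarrow> 'v"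
  assumes VBr: "VBr_module sc r t \<omega> \<rho> Y"
begin

sublocale vector_space sc
  using VBr by (simp add: VBr_module_def Let_def)

interpretation endo: vector_space_pair sc sc ..

lemma Br_module_rho: "Br_module sc r t (\<omega> 0) \<rho>"
  using VBr by (simp add: VBr_module_def Let_def)

lemma linear_rho: "is_diag r t D \<Longrightarrow> clin sc (\<rho> D)"
  using Br_module_rho unfolding Br_module_def by blast

lemma sum_rho_one_d: "(\<Sum>a \<in> Seq r t. \<rho> (one_d (r+t) a) v) = v"
  using Br_module_rho by (simp add: Br_module_def)

lemma rho_label_mismatch:
  assumes "is_diag r t D1" and "is_diag r t D2" and "fst D1 \<noteq> fst (snd D2)"
  shows "\<rho> D1 (\<rho> D2 v) = 0"
proof -
  have "\<rho> D1 \<circ> \<rho> D2 = (if fst D1 = fst (snd D2)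
      then (\<lambda>v. sc (\<omega> 0 ^ dloops (r+t) D1 D2) (\<rho> (dcomp (r+t) D1 D2) v)) else (\<lambda>v. 0))"
    using Br_module_rho assms(1,2) unfolding Br_module_def by blast
  then have "\<rho> D1 \<circ> \<rho> D2 = (\<lambda>v. 0)" using assms(3) by simp
  then show ?thesis by (metis comp_apply)
qed

lemma linear_Y: "j \<in> {1..r+t} \<Longrightarrow> clin sc (Y j)"
  using VBr by (simp add: VBr_module_def Let_def)

lemma Y_commute: "j \<in> {1..r+t} \<Longrightarrow> l \<in> {1..r+t} \<Longrightarrow> Y j (Y l w) = Y l (Y j w)"
  using VBr unfolding VBr_module_def Let_def by (metis comp_apply)

lemma Y_rho_one_d:
  "j \<in> {1..r+t} \<Longrightarrow> b \<in> Seq r t \<Longrightarrow> Y j (\<rho> (one_d (r+t) b) w) = \<rho> (one_d (r+t) b) (Y j w)"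
  using VBr unfolding VBr_module_def Let_def by (metis comp_apply)

lemma wt_space_iff:
  "v \<in> wt_space sc (r+t) \<rho> Y a i \<longleftrightarrow>
    v \<in> range (\<rho> (one_d (r+t) a)) \<and> (\<forall>j\<in>{1..r+t}. v \<in> gen_ker (shift sc (Y j) (i j)))"
  by (simp add: wt_space_def gen_ker_def)

lemma subspace_range_rho_one_d: "b \<in> Seq r t \<Longrightarrow> subspace (range (\<rho> (one_d (r+t) b)))"
  by (rule endo.linear_subspace_image[OF linear_rho[OF is_diag_one_d] subspace_UNIV])

lemma Y_range_rho_one_d:
  assumes "j \<in> {1..r+t}" and "b \<in> Seq r t" and "w \<in> range (\<rho> (one_d (r+t) b))"
  shows "Y j w \<in> range (\<rho> (one_d (r+t) b))"
  using assms Y_rho_one_d by auto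

context
  fixes k assumes k: "k \<in> {1..<r+t}"
begin

lemma Y_opSh: "j \<in> {1..r+t} \<Longrightarrow> j \<notin> {k, Suc k} \<Longrightarrow> Y j (opSh r t \<rho> k w) = opSh r t \<rho> k (Y j w)"
  using VBr k unfolding VBr_module_def Let_def by (metis comp_apply)

lemma opSh_Y: "opSh r t \<rho> k (Y k w) - Y (Suc k) (opSh r t \<rho> k w) = opEh r t \<rho> k w"
  using VBr k unfolding VBr_module_def Let_def by blast

lemma opSh_Y_Suc: "opSh r t \<rho> k (Y (Suc k) w) - Y k (opSh r t \<rho> k w) = - opEh r t \<rho> k w"
  using VBr k unfolding VBr_module_def Let_def by blast

lemma opEh_Y_sum: "opEh r t \<rho> k (Y k w + Y (Suc k) w) = 0"
  using VBr k unfolding VBr_module_def Let_def by blast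

lemma k_range: "k \<in> {1..r+t}" "Suc k \<in> {1..r+t}"
  using k by auto

lemma linear_opSh: "clin sc (opSh r t \<rho> k)"
  unfolding opSh_def
  by (intro endo.linear_compose_sum ballI linear_rho is_diag_sh_d[OF _ k]) simp

lemma linear_opEh: "clin sc (opEh r t \<rho> k)"
proof -
  have "opEh r t \<rho> k = (\<lambda>w. opSh r t \<rho> k (Y k w) - Y (Suc k) (opSh r t \<rho> k w))"
    using opSh_Y by (simp add: fun_eq_iff)
  then show ?thesis
    using endo.linear_compose_sub[OF Vector_Spaces.linear_compose[OF linear_Y linear_opSh]
        Vector_Spaces.linear_compose[OF linear_opSh linear_Y]] k_range
    by (simp add: o_def)
qed

lemma opSh_rho_one_d:
  assumes a: "a \<in> Seq r t"
  shows "opSh r t \<rho> k (\<rho> (one_d (r+t) a) u) \<in> range (\<rho> (one_d (r+t) (sseq k a)))"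
proof -
  let ?one = "\<lambda>b. \<rho> (one_d (r+t) b)" and ?z = "opSh r t \<rho> k (\<rho> (one_d (r+t) a) u)"
  have "?one b ?z = 0" if b: "b \<in> Seq r t" "b \<noteq> sseq k a" for b
  proof -
    have "?one b ?z =
        (\<Sum>c \<in> {c \<in> Seq r t. lab c k \<noteq> lab c (Suc k)}. ?one b (\<rho> (sh_d (r+t) k c) (?one a u)))"
      unfolding opSh_def by (rule endo.linear_sum[OF linear_rho[OF is_diag_one_d[OF b(1)]]])
    also have "\<dots> = 0"
    proof (rule sum.neutral, intro ballI)
      fix c assume c: "c \<in> {c \<in> Seq r t. lab c k \<noteq> lab c (Suc k)}"
      show "?one b (\<rho> (sh_d (r+t) k c) (?one a u)) = 0"
      proof (cases "c = a")
        case True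
        then show ?thesis using b a k
          by (intro rho_label_mismatch is_diag_one_d is_diag_sh_d) (auto simp: one_d_def sh_d_def)
      next
        case False
        then have "\<rho> (sh_d (r+t) k c) (?one a u) = 0" using a c k
          by (intro rho_label_mismatch is_diag_one_d is_diag_sh_d) (auto simp: one_d_def sh_d_def)
        then show ?thesis by (simp add: endo.linear_0[OF linear_rho[OF is_diag_one_d[OF b(1)]]])
      qed
    qed
    finally show ?thesis .
  qed
  then have "?z = ?one (sseq k a) ?z"
    using sum_rho_one_d[of ?z] sum.remove[OF _ sseq_in_Seq[OF a k], of "\<lambda>b. ?one b ?z"]
    by (simp add: finite_Seq)
  then show ?thesis by (metis rangeI)
qed

lemma opSh_gen_ker_other:
  assumes "j \<in> {1..r+t} - {k, Suc k}" and "v \<in> gen_ker (shift sc (Y j) c)"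
  shows "opSh r t \<rho> k v \<in> gen_ker (shift sc (Y j) c)"
  using assms k Y_opSh shift_commute[OF linear_opSh] endo.linear_0[OF linear_opSh]
  by (intro gen_ker_commute[of v _ "opSh r t \<rho> k"]) auto

lemma opSh_wt_space_nonres:
  assumes a: "a \<in> Seq r t" and nonres: "i k + i (Suc k) \<noteq> 0"
  shows "opSh r t \<rho> k ` wt_space sc (r+t) \<rho> Y a i \<subseteq> wt_space sc (r+t) \<rho> Y (sseq k a) (svec k i)"
proof
  fix z assume "z \<in> opSh r t \<rho> k ` wt_space sc (r+t) \<rho> Y a i"
  then obtain v where z: "z = opSh r t \<rho> k v" and "v \<in> wt_space sc (r+t) \<rho> Y a i" by blast
  then obtain u where u: "v = \<rho> (one_d (r+t) a) u"
    and v: "\<And>j. j \<in> {1..r+t} \<Longrightarrow> v \<in> gen_ker (shift sc (Y j) (i j))"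
    unfolding wt_space_iff by blast
  note Yk = linear_Y[OF k_range(1)] and YSk = linear_Y[OF k_range(2)]
  note Sh = linear_opSh and Eh = linear_opEh
  have "z \<in> gen_ker (shift sc (Y j) (svec k i j))" if j: "j \<in> {1..r+t}" for j
  proof -
    consider "j = k" | "j = Suc k" | "j \<in> {1..r+t} - {k, Suc k}" using j by blast
    then show ?thesis
    proof cases
      case 1
      have "z \<in> gen_ker (shift sc (Y k) (i (Suc k)))" unfolding z
      proof (rule intertwiner_gen_ker[OF Yk YSk Sh Eh _ opEh_Y_sum _ nonres])
        show "Y k (Y (Suc k) w) = Y (Suc k) (Y k w)" for w using Y_commute k_range by blast
        show "opSh r t \<rho> k (Y (Suc k) w) = Y k (opSh r t \<rho> k w)" if "opEh r t \<rho> k w = 0" for w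
          using opSh_Y_Suc[of w] that by simp
      qed (use v k_range in auto)
      then show ?thesis using 1 by (simp add: svec_def)
    next
      case 2
      have "z \<in> gen_ker (shift sc (Y (Suc k)) (i k))" unfolding z
      proof (rule intertwiner_gen_ker[OF YSk Yk Sh Eh])
        show "Y (Suc k) (Y k w) = Y k (Y (Suc k) w)" for w using Y_commute k_range by blast
        show "opEh r t \<rho> k (Y (Suc k) w + Y k w) = 0" for w
          using opEh_Y_sum[of w] by (simp add: add.commute)
        show "opSh r t \<rho> k (Y k w) = Y (Suc k) (opSh r t \<rho> k w)" if "opEh r t \<rho> k w = 0" for w
          using opSh_Y[of w] that by simp
        show "i (Suc k) + i k \<noteq> 0" using nonres by (simp add: add.commute)
      qed (use v k_range in auto)
      then show ?thesis using 2 by (simp add: svec_def)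
    next
      case 3
      then show ?thesis using opSh_gen_ker_other v unfolding z by (simp add: svec_def)
    qed
  qed
  moreover have "z \<in> range (\<rho> (one_d (r+t) (sseq k a)))"
    unfolding z u by (rule opSh_rho_one_d[OF a])
  ultimately show "z \<in> wt_space sc (r+t) \<rho> Y (sseq k a) (svec k i)" unfolding wt_space_iff by blast
qed

lemma opSh_wt_space_res:
  assumes fd: "fin_dim sc" and a: "a \<in> Seq r t" and res: "i k + i (Suc k) = 0"
  shows "opSh r t \<rho> k ` wt_space sc (r+t) \<rho> Y a i \<subseteq>
    sum_spaces {i'. (\<forall>j \<in> {1..r+t} - {k, Suc k}. i' j = i j) \<and> i' k + i' (Suc k) = 0}
      (wt_space sc (r+t) \<rho> Y (sseq k a))"
proof
  fix z assume "z \<in> opSh r t \<rho> k ` wt_space sc (r+t) \<rho> Y a i"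
  then obtain v where z: "z = opSh r t \<rho> k v" and "v \<in> wt_space sc (r+t) \<rho> Y a i" by blast
  then obtain u where u: "v = \<rho> (one_d (r+t) a) u"
    and v: "\<And>j. j \<in> {1..r+t} \<Longrightarrow> v \<in> gen_ker (shift sc (Y j) (i j))"
    unfolding wt_space_iff by blast
  note Yk = linear_Y[OF k_range(1)] and YSk = linear_Y[OF k_range(2)]
  note Sh = linear_opSh
  have YY: "Y k (Y (Suc k) w) = Y (Suc k) (Y k w)" for w using Y_commute k_range by blast
  let ?P = "\<lambda>w. Y k w + Y (Suc k) w"
  have P: "clin sc ?P" by (rule endo.linear_compose_add[OF Yk YSk])
  \<comment> \<open>the \<open>opEh\<close> terms of the two defining relations cancel\<close>
  have Sh_P: "opSh r t \<rho> k (?P w) = ?P (opSh r t \<rho> k w)" for w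
    using opSh_Y[of w] opSh_Y_Suc[of w] endo.linear_add[OF Sh]
    by (simp add: algebra_simps)
  define U where "U = range (\<rho> (one_d (r+t) (sseq k a))) \<inter>
      (\<Inter>j \<in> {1..r+t} - {k, Suc k}. gen_ker (shift sc (Y j) (i j))) \<inter> gen_ker ?P"
  have U: "subspace U" unfolding U_def
    by (intro subspace_inter subspace_Int subspace_range_rho_one_d sseq_in_Seq[OF a k]
        subspace_gen_ker P shift_linear linear_Y) auto
  have "Y k w \<in> U" if "w \<in> U" for w
  proof -
    from that have w: "w \<in> range (\<rho> (one_d (r+t) (sseq k a)))" "w \<in> gen_ker ?P"
      "\<And>j. j \<in> {1..r+t} - {k, Suc k} \<Longrightarrow> w \<in> gen_ker (shift sc (Y j) (i j))"
      unfolding U_def by auto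
    have "Y k w \<in> range (\<rho> (one_d (r+t) (sseq k a)))"
      by (rule Y_range_rho_one_d[OF k_range(1) sseq_in_Seq[OF a k] w(1)])
    moreover have "Y k w \<in> gen_ker ?P"
      using YY endo.linear_add[OF Yk] endo.linear_0[OF Yk]
      by (intro gen_ker_commute[of w ?P "Y k"] w(2)) auto
    moreover have "Y k w \<in> gen_ker (shift sc (Y j) (i j))" if "j \<in> {1..r+t} - {k, Suc k}" for j
      using that Y_commute k_range shift_commute[OF Yk] endo.linear_0[OF Yk]
      by (intro gen_ker_commute[of w _ "Y k"] w(3)) auto
    ultimately show ?thesis unfolding U_def by blast
  qed
  moreover have "z \<in> U"
  proof -
    have "v \<in> gen_ker (shift sc ?P (i k + i (Suc k)))"
      by (rule gen_ker_shift_add[OF Yk YSk YY v v]) (use k_range in auto)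
    then have "v \<in> gen_ker ?P" using res by simp
    then have "z \<in> gen_ker ?P"
      unfolding z using Sh_P endo.linear_0[OF Sh]
      by (intro gen_ker_commute[of v ?P "opSh r t \<rho> k"]) auto
    moreover have "z \<in> range (\<rho> (one_d (r+t) (sseq k a)))"
      unfolding z u by (rule opSh_rho_one_d[OF a])
    moreover have "z \<in> gen_ker (shift sc (Y j) (i j))" if "j \<in> {1..r+t} - {k, Suc k}" for j
      unfolding z using that by (intro opSh_gen_ker_other v) auto
    ultimately show ?thesis unfolding U_def by blast
  qed
  ultimately have "z \<in> sum_spaces UNIV (\<lambda>l. U \<inter> gen_ker (shift sc (Y k) l))"
    by (intro gen_eigenspace_decomposition[OF fd Yk U])
  moreover let ?I = "{i'. (\<forall>j \<in> {1..r+t} - {k, Suc k}. i' j = i j) \<and> i' k + i' (Suc k) = 0}"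
  have "sum_spaces UNIV (\<lambda>l. U \<inter> gen_ker (shift sc (Y k) l)) \<subseteq>
      sum_spaces ?I (wt_space sc (r+t) \<rho> Y (sseq k a))"
  proof (rule sum_spaces_reindex[of "\<lambda>l. i(k := l, Suc k := - l)"])
    show "inj (\<lambda>l. i(k := l, Suc k := - l))"
    proof (rule injI)
      fix l l' assume "i(k := l, Suc k := - l) = i(k := l', Suc k := - l')"
      then have "(i(k := l, Suc k := - l)) k = (i(k := l', Suc k := - l')) k" by (rule fun_cong)
      then show "l = l'" by simp
    qed
    show "range (\<lambda>l. i(k := l, Suc k := - l)) \<subseteq> ?I" by (auto split: if_splits)
    show "U \<inter> gen_ker (shift sc (Y k) l) \<subseteq>
        wt_space sc (r+t) \<rho> Y (sseq k a) (i(k := l, Suc k := - l))"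
      for l
    proof
      fix w assume w: "w \<in> U \<inter> gen_ker (shift sc (Y k) l)"
      then have "w \<in> gen_ker (shift sc (Y (Suc k)) (- l))"
        by (intro gen_ker_shift_complement[OF Yk YSk YY]) (auto simp: U_def)
      then show "w \<in> wt_space sc (r+t) \<rho> Y (sseq k a) (i(k := l, Suc k := - l))"
        using w unfolding wt_space_iff U_def by auto
    qed
  qed
  ultimately show "z \<in> sum_spaces ?I (wt_space sc (r+t) \<rho> Y (sseq k a))" by blast
qed

end

end

theorem lemma3p3:
  fixes sc :: "complex \<Rightarrow> 'v::ab_group_add \<Rightarrow> 'v" and r t :: nat and \<omega> :: "nat \<Rightarrow> complex"
    and \<rho> :: "diag \<Rightarrow> 'v \<Rightarrow> 'v" and Y :: "nat \<Rightarrow> 'v \<Rightarrow> 'v"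
    and a :: "bool list" and k :: nat and i :: "nat \<Rightarrow> complex"
  assumes "fin_dim sc"
    and "VBr_module sc r t \<omega> \<rho> Y"
    and "a \<in> Seq r t"
    and "k \<in> {1..<r+t}"
    and "sseq k a \<noteq> a"
  defines "I \<equiv> {i'. (\<forall>j \<in> {1..r+t} - {k, Suc k}. i' j = i j) \<and> i' k + i' (Suc k) = 0}"
  shows "(i k + i (Suc k) \<noteq> 0 \<longrightarrow>
            opSh r t \<rho> k ` wt_space sc (r+t) \<rho> Y a i \<subseteq> wt_space sc (r+t) \<rho> Y (sseq k a) (svec k i))
       \<and> (i k + i (Suc k) = 0 \<longrightarrow>
            opSh r t \<rho> k ` wt_space sc (r+t) \<rho> Y a i \<subseteq>
              sum_spaces I (wt_space sc (r+t) \<rho> Y (sseq k a)))"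
proof -
  interpret VBr_rep sc r t \<omega> \<rho> Y by (rule VBr_rep.intro) (fact assms(2))
  show ?thesis
    using opSh_wt_space_nonres[OF assms(4,3)] opSh_wt_space_res[OF assms(4,1,3)]
    unfolding I_def by blast
qed

end
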